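(* Let $\kappa,\lambda$ be cardinals. If a locally convex space $E$ is $(\kappa,\lambda)_p$-equiconvergent, then the bornology of $E$ is $(\kappa,\lambda)$-tall.
   Context: A topological space $X$ is $(\kappa,\lambda)_p$-equiconvergent at a point $x$ if for every indexed family $\{x_\alpha\}_{\alpha\in\kappa}$ of sequences $x_\alpha\in X^\omega$ converging to $x$ there exists $\Lambda\subseteq\kappa$ with $|\Lambda|=\lambda$ such that for every neighborhood $O_x$ of $x$ there is $n\in\omega$ for which the set $\{\alpha\in\Lambda: x_\alpha(n)\notin O_x\}$ is finite; $X$ is $(\kappa,\lambda)_p$-equiconvergent if it is so at every point. A subset $B$ of a topological vector space is bounded if for every neighborhood $U$ of zero there is $n\in\mathbb N$ with $B\subseteq nU$. The bornology of $E$ is $(\kappa,\lambda)$-tall if every subset $A\subseteq E$ of cardinality $\kappa$ contains a bounded subset $B\subseteq A$ of cardinality $\lambda$. *)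

theory Defs
  imports "HOL-Analysis.Analysis" "HOL-Library.Equipollence"
begin

definition locally_convex_space :: "'a::real_vector topology \<Rightarrow> bool" where
  "locally_convex_space T \<longleftrightarrow>
     topspace T = UNIV \<and>
     continuous_map (prod_topology T T) T (\<lambda>(x, y). x + y) \<and>
     continuous_map (prod_topology euclideanreal T) T (\<lambda>(c, x). c *\<^sub>R x) \<and>
     (\<forall>x U. openin T U \<and> x \<in> U \<longrightarrow> (\<exists>V. openin T V \<and> convex V \<and> x \<in> V \<and> V \<subseteq> U))"

definition nhd_in :: "'a topology \<Rightarrow> 'a \<Rightarrow> 'a set \<Rightarrow> bool" where
  "nhd_in T x W \<longleftrightarrow> (\<exists>U. openin T U \<and> x \<in> U \<and> U \<subseteq> W)"

text \<open>Cardinals kappa, lambda are represented by sets K, L (cardinality = equipollence class).\<close>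
definition equiconvergent_at :: "'a topology \<Rightarrow> 'k set \<Rightarrow> 'l set \<Rightarrow> 'a \<Rightarrow> bool" where
  "equiconvergent_at T K L x \<longleftrightarrow>
     (\<forall>s :: 'k \<Rightarrow> nat \<Rightarrow> 'a.
        (\<forall>\<alpha>\<in>K. (\<forall>n. s \<alpha> n \<in> topspace T) \<and> limitin T (s \<alpha>) x sequentially) \<longrightarrow>
        (\<exists>\<Lambda>. \<Lambda> \<subseteq> K \<and> \<Lambda> \<approx> L \<and>
           (\<forall>W. nhd_in T x W \<longrightarrow> (\<exists>n. finite {\<alpha>\<in>\<Lambda>. s \<alpha> n \<notin> W}))))"

definition equiconvergent :: "'a topology \<Rightarrow> 'k set \<Rightarrow> 'l set \<Rightarrow> bool" where
  "equiconvergent T K L \<longleftrightarrow> (\<forall>x\<in>topspace T. equiconvergent_at T K L x)"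

definition tvs_bounded :: "'a::real_vector topology \<Rightarrow> 'a set \<Rightarrow> bool" where
  "tvs_bounded T B \<longleftrightarrow>
     (\<forall>U. nhd_in T 0 U \<longrightarrow> (\<exists>n::nat. n \<ge> 1 \<and> B \<subseteq> (\<lambda>v. real n *\<^sub>R v) ` U))"

definition tall_bornology :: "'a::real_vector topology \<Rightarrow> 'k set \<Rightarrow> 'l set \<Rightarrow> bool" where
  "tall_bornology T K L \<longleftrightarrow>
     (\<forall>A. A \<subseteq> topspace T \<and> A \<approx> K \<longrightarrow> (\<exists>B. B \<subseteq> A \<and> tvs_bounded T B \<and> B \<approx> L))"

end

theory Submission
  imports Defs
begin

text \<open>Enumerate a set A of size K by g and feed the sequences n \<mapsto> g \<alpha> / (n+1), which all
converge to 0, to equiconvergence at 0. This yields \<Lambda> of size L such that every neighbourhood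
of 0 contains g \<alpha> / (n+1) for all but finitely many \<alpha> \<in> \<Lambda>, for a single n. For a convex
neighbourhood V of 0 the condition g \<alpha> / (k+1) \<in> V persists as k grows, so the finitely many
exceptions can be absorbed by a larger index M; then g ` \<Lambda> \<subseteq> (M+1) V, i.e. g ` \<Lambda> is bounded.\<close>

lemma convex_scaleR_mem:
  assumes "convex S" "0 \<in> S" "x \<in> S" "0 \<le> u" "u \<le> 1"
  shows "u *\<^sub>R x \<in> S"
  using convexD[OF assms(1,3,2), of u "1 - u"] assms(4,5) by simp

lemma convex_inverse_Suc_scaleR_mono:
  assumes "convex S" "0 \<in> S" "inverse (real (Suc k)) *\<^sub>R x \<in> S" "k \<le> m"
  shows "inverse (real (Suc m)) *\<^sub>R x \<in> S"
proof -
  have "(real (Suc k) / real (Suc m)) *\<^sub>R (inverse (real (Suc k)) *\<^sub>R x) \<in> S"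
    using assms(4) by (intro convex_scaleR_mem[OF assms(1-3)]) auto
  then show ?thesis
    by (simp add: field_simps)
qed

lemma uniform_index_from_finite_exceptions:
  assumes mono: "\<And>\<alpha> k m. \<alpha> \<in> \<Lambda> \<Longrightarrow> P \<alpha> k \<Longrightarrow> k \<le> m \<Longrightarrow> P \<alpha> m"
    and ev: "\<And>\<alpha>. \<alpha> \<in> \<Lambda> \<Longrightarrow> eventually (P \<alpha>) sequentially"
    and fin: "finite {\<alpha>\<in>\<Lambda>. \<not> P \<alpha> n}"
  shows "\<exists>m. \<forall>\<alpha>\<in>\<Lambda>. P \<alpha> m"
proof -
  let ?F = "{\<alpha>\<in>\<Lambda>. \<not> P \<alpha> n}"
  have "eventually (\<lambda>m. (\<forall>\<alpha>\<in>?F. P \<alpha> m) \<and> n \<le> m) sequentially"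
    using fin ev by (intro eventually_conj eventually_ball_finite eventually_ge_at_top) auto
  then obtain m where "\<forall>\<alpha>\<in>?F. P \<alpha> m" "n \<le> m"
    using eventually_sequentially by auto
  then have "P \<alpha> m" if "\<alpha> \<in> \<Lambda>" for \<alpha>
    using that mono[of \<alpha> n m] by (cases "P \<alpha> n") auto
  then show ?thesis by blast
qed

lemma lcs_topspace: "locally_convex_space T \<Longrightarrow> topspace T = UNIV"
  unfolding locally_convex_space_def by blast

lemma lcs_scaleR_limitin:
  assumes "locally_convex_space T" "(c \<longlongrightarrow> 0) F"
  shows "limitin T (\<lambda>n. c n *\<^sub>R x) 0 F"
proof -
  have cont: "continuous_map (prod_topology euclideanreal T) T (\<lambda>(c, x). c *\<^sub>R x)"
    using assms(1) unfolding locally_convex_space_def by blast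
  then have "continuous_map euclideanreal T (\<lambda>c. c *\<^sub>R x)"
    using continuous_map_compose[OF _ cont, of euclideanreal "\<lambda>c. (c, x)"]
    by (simp add: continuous_map_pairwise o_def lcs_topspace[OF assms(1)])
  from continuous_map_limit[OF this, of c 0 F] show ?thesis
    using assms(2) by (simp add: o_def)
qed

lemma lcs_tvs_boundedI_convex:
  assumes "locally_convex_space T"
    and "\<And>V. openin T V \<Longrightarrow> convex V \<Longrightarrow> 0 \<in> V \<Longrightarrow>
           \<exists>n::nat. n \<ge> 1 \<and> B \<subseteq> (\<lambda>v. real n *\<^sub>R v) ` V"
  shows "tvs_bounded T B"
  unfolding tvs_bounded_def
proof (intro allI impI)
  fix U assume "nhd_in T 0 U"
  then obtain U0 where "openin T U0" "0 \<in> U0" "U0 \<subseteq> U"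
    unfolding nhd_in_def by blast
  then obtain V where V: "openin T V" "convex V" "0 \<in> V" "V \<subseteq> U"
    using assms(1) unfolding locally_convex_space_def by (meson order_trans)
  then obtain n :: nat where "n \<ge> 1" "B \<subseteq> (\<lambda>v. real n *\<^sub>R v) ` V"
    using assms(2) by blast
  with image_mono[OF V(4)] show "\<exists>n::nat. n \<ge> 1 \<and> B \<subseteq> (\<lambda>v. real n *\<^sub>R v) ` U"
    by (meson order_trans)
qed

lemma lcs_tvs_bounded_if_equiconvergent_scaled:
  assumes lcs: "locally_convex_space T"
    and equi: "\<And>W. nhd_in T 0 W \<Longrightarrow>
                 \<exists>n. finite {\<alpha>\<in>\<Lambda>. inverse (real (Suc n)) *\<^sub>R b \<alpha> \<notin> W}"
  shows "tvs_bounded T (b ` \<Lambda>)"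
proof (rule lcs_tvs_boundedI_convex[OF lcs])
  fix V assume V: "openin T V" "convex V" "0 \<in> V"
  let ?P = "\<lambda>\<alpha> k. inverse (real (Suc k)) *\<^sub>R b \<alpha> \<in> V"
  have "nhd_in T 0 V"
    using V unfolding nhd_in_def by blast
  then obtain n where "finite {\<alpha>\<in>\<Lambda>. \<not> ?P \<alpha> n}"
    using equi by blast
  then have "\<exists>m. \<forall>\<alpha>\<in>\<Lambda>. ?P \<alpha> m"
  proof (rule uniform_index_from_finite_exceptions[rotated 2])
    show "?P \<alpha> m" if "?P \<alpha> k" "k \<le> m" for \<alpha> k m
      using convex_inverse_Suc_scaleR_mono[OF V(2,3) that] .
    have "limitin T (\<lambda>k. inverse (real (Suc k)) *\<^sub>R b \<alpha>) 0 sequentially" for \<alpha>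
      using lcs LIMSEQ_inverse_real_of_nat by (rule lcs_scaleR_limitin)
    then show "eventually (?P \<alpha>) sequentially" for \<alpha>
      using V(1,3) unfolding limitin_def by blast
  qed
  then obtain m where "\<forall>\<alpha>\<in>\<Lambda>. ?P \<alpha> m" ..
  then have "b ` \<Lambda> \<subseteq> (\<lambda>v. real (Suc m) *\<^sub>R v) ` V"
    by (auto intro!: image_eqI[where x = "inverse (real (Suc m)) *\<^sub>R b _"])
  then show "\<exists>n::nat. n \<ge> 1 \<and> b ` \<Lambda> \<subseteq> (\<lambda>v. real n *\<^sub>R v) ` V"
    by (intro exI[of _ "Suc m"]) simp
qed

lemma equiconvergent_at_zero_scaledE:
  assumes lcs: "locally_convex_space T" and "equiconvergent_at T K L 0"
  obtains \<Lambda> where "\<Lambda> \<subseteq> K" "\<Lambda> \<approx> L"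
    "\<And>W. nhd_in T 0 W \<Longrightarrow> \<exists>n. finite {\<alpha>\<in>\<Lambda>. inverse (real (Suc n)) *\<^sub>R b \<alpha> \<notin> W}"
proof -
  have lim: "limitin T (\<lambda>n. inverse (real (Suc n)) *\<^sub>R b \<alpha>) 0 sequentially" for \<alpha>
    using lcs LIMSEQ_inverse_real_of_nat by (rule lcs_scaleR_limitin)
  from assms(2) have "\<exists>\<Lambda>\<subseteq>K. \<Lambda> \<approx> L \<and> (\<forall>W. nhd_in T 0 W \<longrightarrow>
                     (\<exists>n. finite {\<alpha>\<in>\<Lambda>. inverse (real (Suc n)) *\<^sub>R b \<alpha> \<notin> W}))"
    unfolding equiconvergent_at_def lcs_topspace[OF lcs]
    by (rule mp[OF spec[of _ "\<lambda>\<alpha> n. inverse (real (Suc n)) *\<^sub>R b \<alpha>"]]) (use lim in simp_all)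
  then show ?thesis
    using that by auto
qed

theorem proposition3p3:
  fixes T :: "'a::real_vector topology" and K :: "'k set" and L :: "'l set"
  assumes "locally_convex_space T"
    and "equiconvergent T K L"
  shows "tall_bornology T K L"
  unfolding tall_bornology_def
proof (intro allI impI)
  fix A assume "A \<subseteq> topspace T \<and> A \<approx> K"
  then obtain g where g: "bij_betw g K A"
    using eqpoll_sym unfolding eqpoll_def by blast
  have "equiconvergent_at T K L 0"
    using assms lcs_topspace unfolding equiconvergent_def by blast
  then obtain \<Lambda> where \<Lambda>: "\<Lambda> \<subseteq> K" "\<Lambda> \<approx> L"
    and equi: "\<And>W. nhd_in T 0 W \<Longrightarrow>
                 \<exists>n. finite {\<alpha>\<in>\<Lambda>. inverse (real (Suc n)) *\<^sub>R g \<alpha> \<notin> W}"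
    by (rule equiconvergent_at_zero_scaledE[OF assms(1), where b = g]) blast
  have "g ` \<Lambda> \<approx> \<Lambda>"
    using \<Lambda>(1) bij_betw_imp_inj_on[OF g] by (meson inj_on_subset inj_on_image_eqpoll_self)
  then have "g ` \<Lambda> \<approx> L"
    using \<Lambda>(2) eqpoll_trans by blast
  moreover have "g ` \<Lambda> \<subseteq> A"
    using \<Lambda>(1) bij_betw_imp_surj_on[OF g] by blast
  ultimately show "\<exists>B. B \<subseteq> A \<and> tvs_bounded T B \<and> B \<approx> L"
    using lcs_tvs_bounded_if_equiconvergent_scaled[OF assms(1) equi] by blast
qed

end
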